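(* Let $\boldsymbol{\mathcal{G}}=(\mathcal{V},\boldsymbol{\mathcal{E}},\mu(\cdot))$ be a stochastic digraph with vertex set $\mathbb{Z}_n$, edge sets $\mathcal{E}_1,\dots,\mathcal{E}_h$, and out-neighborhood map $H(x,w)=\{y\in\mathbb{Z}_n:(x,y)\in\mathcal{E}_w\}$, such that there is no pair $(i,w)\in\mathbb{Z}_n\times\mathbb{Z}_h$ with $\mu(\{w\})>0$ and $H(i,w)=\emptyset$. Let $L$ and $M$ be the $n\times n$ matrices with entries $$[L]_{i,j}=\sum_{s\in\{w\in\mathbb{Z}_h:\,H(i,w)=\{j\}\}}\mu(\{s\}),\qquad [M]_{i,j}=\sum_{s\in\{w\in\mathbb{Z}_h:\,H(i,w)\cap\{j\}\neq\emptyset\}}\mu(\{s\}),$$ and let $\mathcal{P}=\{P_1,\dots,P_\nu\}$ be the set of matrices constructed as follows: for each $s\in\mathbb{Z}_h$ write the digraph $(\mathbb{Z}_n,\mathcal{E}_s)$ as a union $\bigcup_{i=1}^{T_s}(\mathbb{Z}_n,\mathcal{E}_{s,i})$ of $1$-regular digraphs; for each tuple $(\mathcal{E}_{1,i_1},\dots,\mathcal{E}_{h,i_h})$ with $i_s\in\{1,\dots,T_s\}$ (there are $\nu=\prod_s T_s$ of them) let $g_s:\mathbb{Z}_n\to\mathbb{Z}_n$ be such that $(x,g_s(x))$ is the unique edge out of $x$ in $\mathcal{E}_{s,i_s}$, and define the matrix with entries $[P]_{i,j}=\sum_{s\in\{w\in\mathbb{Z}_h:\,g_w(i)=j\}}\mu(\{s\})$.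 Then $$L\ \dot{\leqslant}\ P\ \dot{\leqslant}\ M\quad\text{for all } P\in\mathcal{P},$$ where $\dot{\leqslant}$ denotes entry-wise inequality.
   Context: A stochastic digraph is a triple $\boldsymbol{\mathcal{G}}=(\mathcal{V},\boldsymbol{\mathcal{E}},\mu(\cdot))$ where $\mathcal{V}=\mathbb{Z}_n=\{1,\dots,n\}$, $\boldsymbol{\mathcal{E}}=\{\mathcal{E}_s\}_{s=1}^h$ ($h<\infty$) with $\mathcal{E}_s\subset\mathbb{Z}_n\times\mathbb{Z}_n$, and $\mu$ is the common distribution on $\mathbb{Z}_h$ of an i.i.d. sequence of random variables $\boldsymbol{w}_k$. A digraph is $1$-regular if every vertex has exactly one out-neighbor. The union of digraphs on the same vertex set is the digraph whose edge set is the union of the edge sets. *)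

theory Defs
  imports "HOL-Probability.Probability"
begin

text \<open>Vertex set Z_n is modelled by a finite type 'v, index set Z_h by a finite type 'w;
  the distribution mu on Z_h is a pmf. A stochastic digraph has edge sets E :: 'w => ('v*'v) set.\<close>

definition out_nbhd :: "('w \<Rightarrow> ('v \<times> 'v) set) \<Rightarrow> 'v \<Rightarrow> 'w \<Rightarrow> 'v set" where
  "out_nbhd E x w = {y. (x, y) \<in> E w}"

definition one_regular :: "('v \<times> 'v) set \<Rightarrow> bool" where
  "one_regular F \<longleftrightarrow> (\<forall>x. \<exists>!y. (x, y) \<in> F)"

definition L_mat :: "('w::finite) pmf \<Rightarrow> ('w \<Rightarrow> ('v \<times> 'v) set) \<Rightarrow> 'v \<Rightarrow> 'v \<Rightarrow> real" where
  "L_mat \<mu> E i j = (\<Sum>s\<in>{w. out_nbhd E i w = {j}}. pmf \<mu> s)"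

definition M_mat :: "('w::finite) pmf \<Rightarrow> ('w \<Rightarrow> ('v \<times> 'v) set) \<Rightarrow> 'v \<Rightarrow> 'v \<Rightarrow> real" where
  "M_mat \<mu> E i j = (\<Sum>s\<in>{w. out_nbhd E i w \<inter> {j} \<noteq> {}}. pmf \<mu> s)"

definition sel_fun :: "('w \<Rightarrow> ('v \<times> 'v) set) \<Rightarrow> 'w \<Rightarrow> 'v \<Rightarrow> 'v" where
  "sel_fun C s x = (THE y. (x, y) \<in> C s)"

definition P_mat :: "('w::finite) pmf \<Rightarrow> ('w \<Rightarrow> 'v \<Rightarrow> 'v) \<Rightarrow> 'v \<Rightarrow> 'v \<Rightarrow> real" where
  "P_mat \<mu> g i j = (\<Sum>s\<in>{w. g w i = j}. pmf \<mu> s)"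

end

theory Submission
  imports Defs
begin

text \<open>Each chosen selection g satisfies g s i \<in> H(i, s) for every s. Hence
  H(i, s) = {j} forces g s i = j, and g s i = j forces j \<in> H(i, s); so the index
  sets of the three sums defining L, P and M are nested, and the entries of a
  pmf are nonnegative.\<close>

lemma sel_fun_mem:
  assumes "one_regular (C s)"
  shows "(x, sel_fun C s x) \<in> C s"
proof -
  have "\<exists>!y. (x, y) \<in> C s"
    using assms unfolding one_regular_def by blast
  then show ?thesis
    unfolding sel_fun_def by (rule theI')
qed

lemma sel_fun_in_out_nbhd:
  assumes "one_regular (C s)" and "C s \<subseteq> E s"
  shows "sel_fun C s x \<in> out_nbhd E x s"
  using sel_fun_mem[of C s x] assms unfolding out_nbhd_def by blast

lemma L_mat_le_P_mat:
  assumes "\<And>s. g s i \<in> out_nbhd E i s"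
  shows "L_mat \<mu> E i j \<le> P_mat \<mu> g i j"
proof -
  have index_subset: "{w. out_nbhd E i w = {j}} \<subseteq> {w. g w i = j}"
    using assms by blast
  show ?thesis
    unfolding L_mat_def P_mat_def by (rule sum_mono2[OF _ index_subset]) auto
qed

lemma P_mat_le_M_mat:
  assumes "\<And>s. g s i \<in> out_nbhd E i s"
  shows "P_mat \<mu> g i j \<le> M_mat \<mu> E i j"
proof -
  have index_subset: "{w. g w i = j} \<subseteq> {w. out_nbhd E i w \<inter> {j} \<noteq> {}}"
    using assms by blast
  show ?thesis
    unfolding P_mat_def M_mat_def by (rule sum_mono2[OF _ index_subset]) auto
qed

theorem corollary1:
  fixes \<mu> :: "('w::finite) pmf"
    and E :: "'w \<Rightarrow> (('v::finite) \<times> 'v) set"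
    and T :: "'w \<Rightarrow> nat"
    and Ed :: "'w \<Rightarrow> nat \<Rightarrow> ('v \<times> 'v) set"
    and idx :: "'w \<Rightarrow> nat"
  assumes nonempty: "\<not> (\<exists>i w. pmf \<mu> w > 0 \<and> out_nbhd E i w = {})"
    and decomp_union: "\<forall>s. E s = (\<Union>k\<in>{1..T s}. Ed s k)"
    and decomp_reg: "\<forall>s. \<forall>k\<in>{1..T s}. one_regular (Ed s k)"
    and choice: "\<forall>s. idx s \<in> {1..T s}"
  shows "\<forall>i j. L_mat \<mu> E i j \<le> P_mat \<mu> (sel_fun (\<lambda>s. Ed s (idx s))) i j
            \<and> P_mat \<mu> (sel_fun (\<lambda>s. Ed s (idx s))) i j \<le> M_mat \<mu> E i j"
proof (intro allI conjI)
  fix i j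
  let ?C = "\<lambda>s. Ed s (idx s)"
  have in_nbhd: "sel_fun ?C s i \<in> out_nbhd E i s" for s
  proof (rule sel_fun_in_out_nbhd)
    show "one_regular (?C s)" using decomp_reg choice by blast
    show "?C s \<subseteq> E s" using decomp_union choice by blast
  qed
  show "L_mat \<mu> E i j \<le> P_mat \<mu> (sel_fun ?C) i j"
    using in_nbhd by (rule L_mat_le_P_mat)
  show "P_mat \<mu> (sel_fun ?C) i j \<le> M_mat \<mu> E i j"
    using in_nbhd by (rule P_mat_le_M_mat)
qed

end
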